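(* Let $F_{\mathcal P}$ be a function determined by Algorithm 1 for a path $\mathcal P$. Then for every configuration $\vec i$ on $\mathrm{Conn}(\mathcal P)$ and every plaquette $p\in\mathcal B_{\mathcal P}$, $F_{\mathcal P}(\vec i\oplus\vec\alpha^p)=\frac{b_p(\vec i\oplus\vec\alpha^{\mathcal P})}{b_p(\vec i)}F_{\mathcal P}(\vec i)$; equivalently $S^+_{\mathcal P}=X_{\mathcal P}\sum_{\vec i}F_{\mathcal P}(\vec i)|\vec i\rangle\langle\vec i|$ commutes with every $B_p$.
   Context: Let $\Lambda$ be a hexagonal (honeycomb) lattice embedded in a closed orientable surface, with one qubit on each edge. For an edge $j$, $\sigma^x_j,\sigma^z_j$ denote the Pauli operators on qubit $j$ and $n^{\pm}_j=\tfrac12(1\pm\sigma^z_j)$. A (string) configuration $\vec i$ is a computational basis state, viewed as a bit string assigning $0$ (empty) or $1$ (occupied) to each edge; $\vec i\oplus\vec\alpha$ is bitwise addition mod 2. For a hexagonal plaquette $p$, label its boundary edges $1,\dots,6$ cyclically (index $0$ means $6$) and its outgoing edges so that edge $12$ meets edges $6,1$; edge $7$ meets $1,2$; edge $8$ meets $2,3$; edge $9$ meets $3,4$; edge $10$ meets $4,5$; edge $11$ meets $5,6$. Define $B_p=\Big(\prod_{j=1}^6\sigma^x_j\Big)\Big(\prod_{j=1}^6(-1)^{n^-_{j-1}n^+_j}\Big)\,i^{n^-_{12}(n^-_1n^-_6-n^+_1n^+_6)}\,i^{n^-_7(n^+_1n^+_2-n^-_1n^-_2)}\,i^{n^+_8(n^-_2n^+_3-n^+_2n^-_3)}\,i^{n^-_9(n^-_3n^-_4-n^+_3n^+_4)}\,i^{n^-_{10}(n^+_4n^+_5-n^-_4n^-_5)}\,i^{n^+_{11}(n^-_5n^+_6-n^+_5n^-_6)}$;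 all $B_p$ commute pairwise and square to the identity. Write $B_p=\prod_{j\in\partial p}\sigma^x_j\sum_{\vec i}b_p(\vec i)|\vec i\rangle\langle\vec i|$, defining the phase $b_p(\vec i)$. Let $\vec\alpha^p$ be the configuration occupied exactly on the boundary edges of $p$. A path $\mathcal P$ is a sequence of edges forming a walk; $\vec\alpha^{\mathcal P}$ is the mod-2 sum of the indicators of its edges and $X_{\mathcal P}$ the product of $\sigma^x$ over its edges. $\mathrm{Conn}(\mathcal P)$ is the set of edges of $\mathcal P$ together with all edges sharing a vertex with an edge of $\mathcal P$; $\mathcal B_{\mathcal P}$ is the set of plaquettes with at least one boundary edge in $\mathrm{Conn}(\mathcal P)$. Define $\theta_{\mathcal P}(\vec i,p_1,\dots,p_m)=\prod_{k=1}^m \frac{b_{p_k}(\vec i\oplus\vec\alpha^{\mathcal P}\oplus\bigoplus_{j<k}\vec\alpha^{p_j})}{b_{p_k}(\vec i\oplus\bigoplus_{j<k}\vec\alpha^{p_j})}$ (a configuration on $\mathrm{Conn}(\mathcal P)$ being extended arbitrarily to the whole lattice). The configuration class of $\vec i$ on $\mathrm{Conn}(\mathcal P)$ is $\mathcal C_{\mathcal P}(\vec i)=\{\vec i\oplus\bigoplus_{p\in S}\vec\alpha^p|_{\mathrm{Conn}(\mathcal P)}:S\subseteq\mathcal B_{\mathcal P}\}$. Algorithm 1: for each configuration class pick a representative $\vec i$, set $F_{\mathcal P}(\vec i)$ to an arbitrary unit complex number, and for every subset $\{p_1,\dots,p_m\}\subseteq\mathcal B_{\mathcal P}$ set $F_{\mathcal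 P}(\vec i\oplus\bigoplus_k\vec\alpha^{p_k})=\theta_{\mathcal P}(\vec i,p_1,\dots,p_m)F_{\mathcal P}(\vec i)$. *)

theory Defs
  imports Complex_Main
begin

text \<open>A configuration is the set of occupied edges. Bitwise addition mod 2
is symmetric difference.\<close>

definition xor_set :: "'e set \<Rightarrow> 'e set \<Rightarrow> 'e set" (infixl "\<oplus>\<^sub>s" 65) where
  "A \<oplus>\<^sub>s B = (A - B) \<union> (B - A)"

text \<open>Occupation numbers: n^- = 1 on an occupied edge, n^+ = 1 on an empty edge
(sigma^z |0> = |0>).\<close>

definition nm :: "'e set \<Rightarrow> 'e \<Rightarrow> int" where
  "nm x e = (if e \<in> x then 1 else 0)"

definition np :: "'e set \<Rightarrow> 'e \<Rightarrow> int" where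
  "np x e = (if e \<in> x then 0 else 1)"

text \<open>ends e = set of the two end vertices of edge e.
 lab p j (j = 1..12) is the labelling of plaquette p: lab p 1..6 are the boundary
 edges in cyclic order, lab p (6+j) is the outgoing edge at the vertex shared by
 boundary edges j and (j mod 6 + 1).\<close>

definition honeycomb :: "('e::finite \<Rightarrow> 'v::finite set) \<Rightarrow> ('p::finite \<Rightarrow> nat \<Rightarrow> 'e) \<Rightarrow> bool" where
  "honeycomb ends lab \<longleftrightarrow>
     (\<forall>e. card (ends e) = 2) \<and>
     (\<forall>v. card {e. v \<in> ends e} = 3) \<and>
     (\<forall>p. inj_on (lab p) {1..6}) \<and>
     (\<forall>p. \<forall>j\<in>{1..6::nat}.
        lab p (6 + j) \<notin> {lab p j, lab p (j mod 6 + 1)} \<and>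
        (\<exists>v. v \<in> ends (lab p j) \<and> v \<in> ends (lab p (j mod 6 + 1)) \<and> v \<in> ends (lab p (6 + j)))) \<and>
     (\<forall>e. card {p. e \<in> lab p ` {1..6}} = 2)"

definition alpha_p :: "('p \<Rightarrow> nat \<Rightarrow> 'e) \<Rightarrow> 'p \<Rightarrow> 'e set" where
  "alpha_p lab p = lab p ` {1..6}"

definition bphase :: "('p \<Rightarrow> nat \<Rightarrow> 'e) \<Rightarrow> 'p \<Rightarrow> 'e set \<Rightarrow> complex" where
  "bphase lab p x =
    (let m = (\<lambda>j. nm x (lab p j)); q = (\<lambda>j. np x (lab p j)) in
     (\<Prod>j\<in>{1..6::nat}. (-1::complex) ^ nat (m (if j = 1 then 6 else j - 1) * q j))
     * \<i> powi (m 12 * (m 1 * m 6 - q 1 * q 6))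
     * \<i> powi (m 7 * (q 1 * q 2 - m 1 * m 2))
     * \<i> powi (q 8 * (m 2 * q 3 - q 2 * m 3))
     * \<i> powi (m 9 * (m 3 * m 4 - q 3 * q 4))
     * \<i> powi (m 10 * (q 4 * q 5 - m 4 * m 5))
     * \<i> powi (q 11 * (m 5 * q 6 - q 5 * m 6)))"

type_synonym 'e op = "'e set \<Rightarrow> 'e set \<Rightarrow> complex"

definition op_mult :: "'e::finite op \<Rightarrow> 'e op \<Rightarrow> 'e op" where
  "op_mult A B = (\<lambda>j i. \<Sum>k\<in>UNIV. A j k * B k i)"

definition op_id :: "'e op" where
  "op_id = (\<lambda>j i. if j = i then 1 else 0)"

text \<open>B_p = (prod sigma^x over boundary) (sum_i b_p(i) |i><i|).\<close>
definition Bop :: "('p \<Rightarrow> nat \<Rightarrow> 'e) \<Rightarrow> 'p \<Rightarrow> 'e op" where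
  "Bop lab p = (\<lambda>j i. if j = i \<oplus>\<^sub>s alpha_p lab p then bphase lab p i else 0)"

definition B_commuting_involutions :: "('p \<Rightarrow> nat \<Rightarrow> 'e::finite) \<Rightarrow> bool" where
  "B_commuting_involutions lab \<longleftrightarrow>
     (\<forall>p q. op_mult (Bop lab p) (Bop lab q) = op_mult (Bop lab q) (Bop lab p)) \<and>
     (\<forall>p. op_mult (Bop lab p) (Bop lab p) = op_id)"

definition is_walk :: "('e \<Rightarrow> 'v set) \<Rightarrow> 'e list \<Rightarrow> bool" where
  "is_walk ends P \<longleftrightarrow>
     (\<exists>vs. length vs = length P + 1 \<and>
        (\<forall>k < length P. ends (P ! k) = {vs ! k, vs ! Suc k}))"

definition alpha_path :: "'e list \<Rightarrow> 'e set" where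
  "alpha_path P = {e. odd (count_list P e)}"

definition Conn :: "('e \<Rightarrow> 'v set) \<Rightarrow> 'e list \<Rightarrow> 'e set" where
  "Conn ends P = set P \<union> {e. \<exists>f\<in>set P. ends e \<inter> ends f \<noteq> {}}"

definition BP :: "('e \<Rightarrow> 'v set) \<Rightarrow> ('p \<Rightarrow> nat \<Rightarrow> 'e) \<Rightarrow> 'e list \<Rightarrow> 'p set" where
  "BP ends lab P = {p. alpha_p lab p \<inter> Conn ends P \<noteq> {}}"

definition alpha_list :: "('p \<Rightarrow> nat \<Rightarrow> 'e) \<Rightarrow> 'p list \<Rightarrow> 'e set" where
  "alpha_list lab ps = foldr (\<lambda>p A. alpha_p lab p \<oplus>\<^sub>s A) ps {}"

definition alpha_set :: "('p::finite \<Rightarrow> nat \<Rightarrow> 'e) \<Rightarrow> 'p set \<Rightarrow> 'e set" where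
  "alpha_set lab S = {e. odd (card {p\<in>S. e \<in> alpha_p lab p})}"

text \<open>theta_P(i, p_1..p_m); a configuration on Conn(P) is extended by zeros.\<close>
definition theta :: "('p \<Rightarrow> nat \<Rightarrow> 'e) \<Rightarrow> 'e list \<Rightarrow> 'e set \<Rightarrow> 'p list \<Rightarrow> complex" where
  "theta lab P x ps =
     (\<Prod>k<length ps.
        bphase lab (ps ! k) (x \<oplus>\<^sub>s alpha_path P \<oplus>\<^sub>s alpha_list lab (take k ps))
        / bphase lab (ps ! k) (x \<oplus>\<^sub>s alpha_list lab (take k ps)))"

definition config_class :: "('e \<Rightarrow> 'v set) \<Rightarrow> ('p::finite \<Rightarrow> nat \<Rightarrow> 'e) \<Rightarrow> 'e list \<Rightarrow> 'e set \<Rightarrow> 'e set set" where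
  "config_class ends lab P x =
     {(x \<oplus>\<^sub>s alpha_set lab S) \<inter> Conn ends P | S. S \<subseteq> BP ends lab P}"

text \<open>F is a function determined by Algorithm 1: there is a choice of one
representative per configuration class, F has modulus one on it, and for every
subset of B_P (enumerated in some order p_1..p_m) the assignment of the algorithm holds.\<close>
definition algorithm1_output ::
  "('e::finite \<Rightarrow> 'v set) \<Rightarrow> ('p::finite \<Rightarrow> nat \<Rightarrow> 'e) \<Rightarrow> 'e list \<Rightarrow> ('e set \<Rightarrow> complex) \<Rightarrow> bool" where
  "algorithm1_output ends lab P F \<longleftrightarrow>
    (\<exists>rep. \<forall>x. x \<subseteq> Conn ends P \<longrightarrow>
       rep x \<in> config_class ends lab P x \<and>
       (\<forall>y\<in>config_class ends lab P x. rep y = rep x) \<and>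
       cmod (F (rep x)) = 1 \<and>
       (\<forall>S \<subseteq> BP ends lab P. \<exists>ps. distinct ps \<and> set ps = S \<and>
          F ((rep x \<oplus>\<^sub>s alpha_list lab ps) \<inter> Conn ends P)
            = theta lab P (rep x) ps * F (rep x)))"

text \<open>S^+_P = X_P sum_i F_P(i|Conn) |i><i|.\<close>
definition Splus :: "('e \<Rightarrow> 'v set) \<Rightarrow> 'e list \<Rightarrow> ('e set \<Rightarrow> complex) \<Rightarrow> 'e op" where
  "Splus ends P F = (\<lambda>j i. if j = i \<oplus>\<^sub>s alpha_path P then F (i \<inter> Conn ends P) else 0)"

end

theory Submission
  imports Defs "HOL-Library.Multiset"
begin

text \<open>Applying B_{p_1}, ..., B_{p_m} to |i\<rangle> produces the product of the phases b_{p_k} met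
along the way. Because the B_p commute and square to the identity, this product only depends on
the set {p_1, ..., p_m}, and toggling one plaquette p multiplies it by b_p at the configuration
reached. Hence the values Algorithm 1 assigns to i and i \<oplus> alpha^p differ by the ratio
b_p(j \<oplus> alpha^P) / b_p(j) at a configuration j that agrees with i on Conn(P). Every factor of
b_p involves only edges meeting at one vertex, so these edges either all lie in Conn(P) or all
avoid P; therefore the ratio only depends on j restricted to Conn(P), and it is 1 when p is not
in B_P. The second identity is the first one read off matrix entries.\<close>

lemma xor_set_assoc: "(A \<oplus>\<^sub>s B) \<oplus>\<^sub>s C = A \<oplus>\<^sub>s (B \<oplus>\<^sub>s C)"
  by (auto simp: xor_set_def)

lemma xor_set_commute: "A \<oplus>\<^sub>s B = B \<oplus>\<^sub>s A"
  by (auto simp: xor_set_def)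

lemma xor_set_empty [simp]: "A \<oplus>\<^sub>s {} = A" "{} \<oplus>\<^sub>s A = A"
  by (auto simp: xor_set_def)

lemma xor_set_self [simp]: "A \<oplus>\<^sub>s A = {}"
  by (auto simp: xor_set_def)

lemma mem_xor_set: "e \<in> A \<oplus>\<^sub>s B \<longleftrightarrow> (e \<in> A) \<noteq> (e \<in> B)"
  by (auto simp: xor_set_def)

lemma Int_xor_set_Int: "((A \<inter> C) \<oplus>\<^sub>s B) \<inter> C = (A \<oplus>\<^sub>s B) \<inter> C"
  by (auto simp: xor_set_def)

lemma alpha_list_Cons: "alpha_list lab (p # ps) = alpha_p lab p \<oplus>\<^sub>s alpha_list lab ps"
  by (simp add: alpha_list_def)

lemma alpha_list_append: "alpha_list lab (ps @ qs) = alpha_list lab ps \<oplus>\<^sub>s alpha_list lab qs"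
  by (induction ps) (auto simp: alpha_list_def xor_set_assoc)

lemma alpha_list_single: "alpha_list lab [p] = alpha_p lab p"
  by (simp add: alpha_list_def)

lemma alpha_list_eq_odd_filter:
  "alpha_list lab ps = {e. odd (length (filter (\<lambda>q. e \<in> alpha_p lab q) ps))}"
proof (induction ps)
  case (Cons p ps)
  then show ?case by (intro set_eqI) (simp add: alpha_list_Cons mem_xor_set)
qed (simp add: alpha_list_def)

lemma alpha_list_mset_cong:
  assumes "mset ps = mset qs" shows "alpha_list lab ps = alpha_list lab qs"
proof -
  from assms have "length (filter f ps) = length (filter f qs)" for f
    by (simp flip: size_mset)
  then show ?thesis by (simp add: alpha_list_eq_odd_filter)
qed

lemma alpha_list_eq_alpha_set:
  assumes "distinct ps" shows "alpha_list lab ps = alpha_set lab (set ps)"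
proof -
  have "{q. e \<in> alpha_p lab q} \<inter> set ps = {q \<in> set ps. e \<in> alpha_p lab q}" for e by auto
  with assms show ?thesis
    by (simp add: alpha_list_eq_odd_filter alpha_set_def distinct_length_filter)
qed

subsection \<open>Phases of products of plaquette operators\<close>

lemma op_mult_weighted_shift:
  assumes "\<And>k i. N k i = (if k = i \<oplus>\<^sub>s D then n i else 0)"
  shows "op_mult M N j i = M j (i \<oplus>\<^sub>s D) * n i"
  unfolding op_mult_def assms by (simp add: if_distrib cong: if_cong)

lemma op_mult_Bop_Bop:
  "op_mult (Bop lab a) (Bop lab b) j i =
     (if j = i \<oplus>\<^sub>s alpha_p lab b \<oplus>\<^sub>s alpha_p lab a then bphase lab a (i \<oplus>\<^sub>s alpha_p lab b) else 0)
     * bphase lab b i"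
  by (subst op_mult_weighted_shift[of _ "alpha_p lab b" "bphase lab b"]) (simp_all add: Bop_def)

lemma bphase_commute:
  assumes "B_commuting_involutions lab"
  shows "bphase lab a x * bphase lab b (x \<oplus>\<^sub>s alpha_p lab a)
       = bphase lab b x * bphase lab a (x \<oplus>\<^sub>s alpha_p lab b)"
proof -
  let ?y = "x \<oplus>\<^sub>s alpha_p lab a \<oplus>\<^sub>s alpha_p lab b"
  have "op_mult (Bop lab a) (Bop lab b) ?y x = op_mult (Bop lab b) (Bop lab a) ?y x"
    using assms by (simp add: B_commuting_involutions_def)
  then show ?thesis
    unfolding op_mult_Bop_Bop by (simp add: xor_set_assoc xor_set_commute[of "alpha_p lab a"] mult.commute)
qed

lemma bphase_involution:
  assumes "B_commuting_involutions lab"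
  shows "bphase lab p (x \<oplus>\<^sub>s alpha_p lab p) * bphase lab p x = 1"
proof -
  have "op_mult (Bop lab p) (Bop lab p) x x = op_id x x"
    using assms by (simp add: B_commuting_involutions_def)
  then show ?thesis unfolding op_mult_Bop_Bop by (simp add: xor_set_assoc op_id_def)
qed

text \<open>B_{p_m} \<cdots> B_{p_1} |x\<rangle> = phase_prod lab x [p_1, ..., p_m]
  |x \<oplus> alpha_list lab [p_1, ..., p_m]\<rangle>.\<close>

definition phase_prod :: "('p \<Rightarrow> nat \<Rightarrow> 'e) \<Rightarrow> 'e set \<Rightarrow> 'p list \<Rightarrow> complex" where
  "phase_prod lab x ps = (\<Prod>k<length ps. bphase lab (ps ! k) (x \<oplus>\<^sub>s alpha_list lab (take k ps)))"

lemma phase_prod_Nil [simp]: "phase_prod lab x [] = 1"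
  by (simp add: phase_prod_def)

lemma phase_prod_Cons:
  "phase_prod lab x (p # ps) = bphase lab p x * phase_prod lab (x \<oplus>\<^sub>s alpha_p lab p) ps"
  unfolding phase_prod_def
  by (simp add: prod.lessThan_Suc_shift alpha_list_def xor_set_assoc del: prod.lessThan_Suc)

lemma phase_prod_append:
  "phase_prod lab x (ps @ qs) = phase_prod lab x ps * phase_prod lab (x \<oplus>\<^sub>s alpha_list lab ps) qs"
  by (induction ps arbitrary: x) (auto simp: phase_prod_Cons alpha_list_def xor_set_assoc)

lemma phase_prod_snoc:
  "phase_prod lab x (ps @ [p]) = phase_prod lab x ps * bphase lab p (x \<oplus>\<^sub>s alpha_list lab ps)"
  by (simp add: phase_prod_append phase_prod_Cons)

lemma theta_eq_phase_prod:
  "theta lab P x ps = phase_prod lab (x \<oplus>\<^sub>s alpha_path P) ps / phase_prod lab x ps"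
  unfolding theta_def phase_prod_def by (rule prod_dividef)

lemma phase_prod_swap:
  assumes "B_commuting_involutions lab"
  shows "phase_prod lab x (ps @ a # b # qs) = phase_prod lab x (ps @ b # a # qs)"
proof -
  have "phase_prod lab y (a # b # qs) = phase_prod lab y (b # a # qs)" for y
    using bphase_commute[OF assms, of a y b]
    by (simp add: phase_prod_Cons xor_set_assoc xor_set_commute[of "alpha_p lab a"])
  then show ?thesis by (simp add: phase_prod_append)
qed

lemma phase_prod_move_last:
  assumes "B_commuting_involutions lab"
  shows "phase_prod lab x (ps @ q # qs) = phase_prod lab x (ps @ qs @ [q])"
proof (induction qs arbitrary: ps)
  case (Cons r qs)
  have "phase_prod lab x (ps @ q # r # qs) = phase_prod lab x ((ps @ [r]) @ q # qs)"
    using phase_prod_swap[OF assms] by simp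
  also have "\<dots> = phase_prod lab x ((ps @ [r]) @ qs @ [q])" by (rule Cons.IH)
  finally show ?case by simp
qed simp

lemma phase_prod_mset_cong:
  assumes "B_commuting_involutions lab" and "mset ps = mset qs"
  shows "phase_prod lab x ps = phase_prod lab x qs"
  using assms(2)
proof (induction qs arbitrary: ps rule: rev_induct)
  case (snoc q qs)
  then have "q \<in># mset ps" by simp
  then have "q \<in> set ps" by simp
  then obtain us vs where ps: "ps = us @ q # vs" by (metis split_list)
  with snoc.prems have m: "mset (us @ vs) = mset qs" by simp
  have "phase_prod lab x ps = phase_prod lab x ((us @ vs) @ [q])"
    using phase_prod_move_last[OF assms(1)] ps by simp
  also have "\<dots> = phase_prod lab x (qs @ [q])"
    unfolding phase_prod_snoc snoc.IH[OF m] alpha_list_mset_cong[OF m] ..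
  finally show ?case .
qed simp

lemma phase_prod_toggle:
  assumes comm: "B_commuting_involutions lab"
    and "distinct ps" "distinct qs" "set qs = (set ps - {p}) \<union> ({p} - set ps)"
  shows "phase_prod lab x qs = bphase lab p (x \<oplus>\<^sub>s alpha_list lab ps) * phase_prod lab x ps"
    and "alpha_list lab qs = alpha_list lab ps \<oplus>\<^sub>s alpha_p lab p"
proof -
  have "phase_prod lab x qs = bphase lab p (x \<oplus>\<^sub>s alpha_list lab ps) * phase_prod lab x ps
      \<and> alpha_list lab qs = alpha_list lab ps \<oplus>\<^sub>s alpha_p lab p"
  proof (cases "p \<in> set ps")
    case False
    with assms have "mset qs = mset (ps @ [p])"
      by (subst set_eq_iff_mset_eq_distinct[symmetric]) auto
    then show ?thesis
      using phase_prod_mset_cong[OF comm] alpha_list_mset_cong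
      by (metis mult.commute phase_prod_snoc alpha_list_append alpha_list_single)
  next
    case True
    with assms have m: "mset ps = mset (qs @ [p])"
      by (subst set_eq_iff_mset_eq_distinct[symmetric]) auto
    then have a: "alpha_list lab ps = alpha_list lab qs \<oplus>\<^sub>s alpha_p lab p"
      using alpha_list_mset_cong by (metis alpha_list_append alpha_list_single)
    let ?b = "bphase lab p (x \<oplus>\<^sub>s alpha_list lab qs)"
    have "phase_prod lab x ps = phase_prod lab x qs * ?b"
      using phase_prod_mset_cong[OF comm m] by (simp add: phase_prod_snoc)
    moreover have "bphase lab p (x \<oplus>\<^sub>s alpha_list lab ps) * ?b = 1"
      using bphase_involution[OF comm, of p "x \<oplus>\<^sub>s alpha_list lab qs"] by (simp add: a xor_set_assoc)
    ultimately show ?thesis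
      by (simp add: a xor_set_assoc)
  qed
  then show "phase_prod lab x qs = bphase lab p (x \<oplus>\<^sub>s alpha_list lab ps) * phase_prod lab x ps"
    and "alpha_list lab qs = alpha_list lab ps \<oplus>\<^sub>s alpha_p lab p" by blast+
qed

lemma theta_toggle:
  assumes "B_commuting_involutions lab"
    and "distinct ps" "distinct qs" "set qs = (set ps - {p}) \<union> ({p} - set ps)"
  shows "theta lab P x qs =
      bphase lab p ((x \<oplus>\<^sub>s alpha_list lab ps) \<oplus>\<^sub>s alpha_path P) / bphase lab p (x \<oplus>\<^sub>s alpha_list lab ps)
      * theta lab P x ps"
proof -
  have "x \<oplus>\<^sub>s alpha_path P \<oplus>\<^sub>s alpha_list lab ps = (x \<oplus>\<^sub>s alpha_list lab ps) \<oplus>\<^sub>s alpha_path P"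
    by (simp add: xor_set_assoc xor_set_commute[of "alpha_path P"])
  then show ?thesis
    unfolding theta_eq_phase_prod phase_prod_toggle(1)[OF assms]
    by (simp add: times_divide_times_eq)
qed

subsection \<open>Locality of the plaquette phases\<close>

lemma alpha_path_subset_set: "alpha_path P \<subseteq> set P"
  unfolding alpha_path_def by (metis (mono_tags) count_list_0_iff even_zero mem_Collect_eq subsetI)

lemma star_subset_Conn_or_disjoint:
  assumes "\<forall>e\<in>E. v \<in> ends e"
  shows "E \<subseteq> Conn ends P \<or> E \<inter> alpha_path P = {}"
proof (rule disjCI)
  assume "E \<inter> alpha_path P \<noteq> {}"
  then obtain f where "f \<in> E" "f \<in> set P"
    using alpha_path_subset_set[of P] by blast
  with assms have "\<forall>e\<in>E. v \<in> ends e \<inter> ends f" by blast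
  with \<open>f \<in> set P\<close> show "E \<subseteq> Conn ends P"
    unfolding Conn_def by blast
qed

definition corner :: "('p \<Rightarrow> nat \<Rightarrow> 'e) \<Rightarrow> 'p \<Rightarrow> nat \<Rightarrow> 'e set" where
  "corner lab p j = {lab p j, lab p (j mod 6 + 1), lab p (6 + j)}"

lemma corner_subset_Conn_or_disjoint:
  assumes "honeycomb ends lab" "j \<in> {1..6}"
  shows "corner lab p j \<subseteq> Conn ends P \<or> corner lab p j \<inter> alpha_path P = {}"
proof -
  have "\<forall>p. \<forall>j\<in>{1..6::nat}. \<exists>v. v \<in> ends (lab p j) \<and> v \<in> ends (lab p (j mod 6 + 1))
          \<and> v \<in> ends (lab p (6 + j))"
    using assms(1) unfolding honeycomb_def by blast
  with assms(2) obtain v where "\<forall>e\<in>corner lab p j. v \<in> ends e"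
    unfolding corner_def by blast
  then show ?thesis by (rule star_subset_Conn_or_disjoint)
qed

definition depends_only_on :: "'e set \<Rightarrow> ('e set \<Rightarrow> 'a) \<Rightarrow> bool" where
  "depends_only_on E g \<longleftrightarrow> (\<forall>x. g (x \<inter> E) = g x)"

lemma depends_only_onD: "depends_only_on E g \<Longrightarrow> x \<inter> E = y \<inter> E \<Longrightarrow> g x = g y"
  unfolding depends_only_on_def by metis

lemma nm_Int: "e \<in> E \<Longrightarrow> nm (x \<inter> E) e = nm x e"
  and np_Int: "e \<in> E \<Longrightarrow> np (x \<inter> E) e = np x e"
  by (simp_all add: nm_def np_def)

text \<open>b_p is a product of nonvanishing factors, each depending only on edges at one corner of p.\<close>

lemma bphase_factor_induct:
  fixes Q :: "('e set \<Rightarrow> complex) \<Rightarrow> bool"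
  assumes one: "Q (\<lambda>_. 1)"
    and mult: "\<And>f g. Q f \<Longrightarrow> Q g \<Longrightarrow> Q (\<lambda>x. f x * g x)"
    and factor: "\<And>j E g. j \<in> {1..6} \<Longrightarrow> E \<subseteq> corner lab p j \<Longrightarrow> depends_only_on E g
                   \<Longrightarrow> (\<And>x. g x \<noteq> 0) \<Longrightarrow> Q g"
  shows "Q (bphase lab p)"
proof -
  let ?m = "\<lambda>x j. nm x (lab p j)" and ?q = "\<lambda>x j. np x (lab p j)"
  let ?s = "\<lambda>j x. (-1::complex) ^ nat (?m x (if j = 1 then 6 else j - 1) * ?q x j)"
  note local_simps = depends_only_on_def nm_Int np_Int
  have signs: "Q (\<lambda>x. \<Prod>j\<in>J. ?s j x)" if "finite J" "J \<subseteq> {1..6}" for J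
    using that
  proof (induction J rule: finite_induct)
    case (insert j J)
    let ?i = "if j = 1 then 6 else j - 1 :: nat"
    have "Q (?s j)"
    proof (rule factor[of ?i "{lab p ?i, lab p j}"])
      show "?i \<in> {1..6}" "{lab p ?i, lab p j} \<subseteq> corner lab p ?i"
        using insert.prems by (auto simp: corner_def)
    qed (simp_all add: local_simps)
    with insert have "Q (\<lambda>x. ?s j x * (\<Prod>i\<in>J. ?s i x))" by (intro mult) simp_all
    with insert.hyps show ?case by simp
  qed (simp add: one)
  txt \<open>Naming the three edges keeps their indices as literal numerals for the simplifier.\<close>
  have corner_factor: "Q g"
    if "j \<in> {1..6}" "k = j mod 6 + 1" "l = 6 + j" "depends_only_on {lab p j, lab p k, lab p l} g"
       "\<And>x. g x \<noteq> 0" for j k l g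
    using factor[OF that(1) _ that(4,5)] that(2,3) by (simp add: corner_def)
  have "Q (\<lambda>x. \<i> powi (?m x 12 * (?m x 1 * ?m x 6 - ?q x 1 * ?q x 6)))"
    by (rule corner_factor[of 6 1 12]) (simp_all add: local_simps)
  moreover have "Q (\<lambda>x. \<i> powi (?m x 7 * (?q x 1 * ?q x 2 - ?m x 1 * ?m x 2)))"
    by (rule corner_factor[of 1 2 7]) (simp_all add: local_simps)
  moreover have "Q (\<lambda>x. \<i> powi (?q x 8 * (?m x 2 * ?q x 3 - ?q x 2 * ?m x 3)))"
    by (rule corner_factor[of 2 3 8]) (simp_all add: local_simps)
  moreover have "Q (\<lambda>x. \<i> powi (?m x 9 * (?m x 3 * ?m x 4 - ?q x 3 * ?q x 4)))"
    by (rule corner_factor[of 3 4 9]) (simp_all add: local_simps)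
  moreover have "Q (\<lambda>x. \<i> powi (?m x 10 * (?q x 4 * ?q x 5 - ?m x 4 * ?m x 5)))"
    by (rule corner_factor[of 4 5 10]) (simp_all add: local_simps)
  moreover have "Q (\<lambda>x. \<i> powi (?q x 11 * (?m x 5 * ?q x 6 - ?q x 5 * ?m x 6)))"
    by (rule corner_factor[of 5 6 11]) (simp_all add: local_simps)
  ultimately show ?thesis
    unfolding bphase_def[abs_def] Let_def by (intro mult signs) simp_all
qed

definition Conn_determines_ratio :: "('e \<Rightarrow> 'v set) \<Rightarrow> 'e list \<Rightarrow> ('e set \<Rightarrow> complex) \<Rightarrow> bool" where
  "Conn_determines_ratio ends P g \<longleftrightarrow>
     (\<forall>y z. y \<inter> Conn ends P = z \<inter> Conn ends P \<longrightarrow>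
        g (y \<oplus>\<^sub>s alpha_path P) / g y = g (z \<oplus>\<^sub>s alpha_path P) / g z)"

lemma Conn_determines_ratio_mult:
  assumes "Conn_determines_ratio ends P f" "Conn_determines_ratio ends P g"
  shows "Conn_determines_ratio ends P (\<lambda>x. f x * g x)"
  unfolding Conn_determines_ratio_def
proof (intro allI impI)
  fix y z assume "y \<inter> Conn ends P = z \<inter> Conn ends P"
  with assms have "f (y \<oplus>\<^sub>s alpha_path P) / f y = f (z \<oplus>\<^sub>s alpha_path P) / f z"
    and "g (y \<oplus>\<^sub>s alpha_path P) / g y = g (z \<oplus>\<^sub>s alpha_path P) / g z"
    unfolding Conn_determines_ratio_def by blast+
  then show "f (y \<oplus>\<^sub>s alpha_path P) * g (y \<oplus>\<^sub>s alpha_path P) / (f y * g y)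
      = f (z \<oplus>\<^sub>s alpha_path P) * g (z \<oplus>\<^sub>s alpha_path P) / (f z * g z)"
    by (simp only: times_divide_times_eq[symmetric])
qed

lemma Conn_determines_ratio_bphase:
  assumes "honeycomb ends lab"
  shows "Conn_determines_ratio ends P (bphase lab p)"
proof (induction rule: bphase_factor_induct)
  case (3 j E g)
  show ?case
    using corner_subset_Conn_or_disjoint[OF assms \<open>j \<in> {1..6}\<close>, of p P]
  proof
    assume "corner lab p j \<subseteq> Conn ends P"
    with \<open>E \<subseteq> corner lab p j\<close> have EC: "E \<subseteq> Conn ends P" by (rule order_trans)
    show ?thesis unfolding Conn_determines_ratio_def
    proof (intro allI impI)
      fix y z assume "y \<inter> Conn ends P = z \<inter> Conn ends P"
      with EC have "y \<inter> E = z \<inter> E" "(y \<oplus>\<^sub>s alpha_path P) \<inter> E = (z \<oplus>\<^sub>s alpha_path P) \<inter> E"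
        unfolding xor_set_def by blast+
      with \<open>depends_only_on E g\<close>
      show "g (y \<oplus>\<^sub>s alpha_path P) / g y = g (z \<oplus>\<^sub>s alpha_path P) / g z"
        by (simp add: depends_only_onD[of E g y z] depends_only_onD[of E g "y \<oplus>\<^sub>s alpha_path P"])
    qed
  next
    assume "corner lab p j \<inter> alpha_path P = {}"
    with \<open>E \<subseteq> corner lab p j\<close> have "(u \<oplus>\<^sub>s alpha_path P) \<inter> E = u \<inter> E" for u
      unfolding xor_set_def by blast
    with \<open>depends_only_on E g\<close> have "g (u \<oplus>\<^sub>s alpha_path P) = g u" for u
      by (rule depends_only_onD)
    with \<open>\<And>x. g x \<noteq> 0\<close> show ?thesis by (simp add: Conn_determines_ratio_def)
  qed
next
  case 1
  show ?case by (simp add: Conn_determines_ratio_def)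
next
  case (2 f g)
  then show ?case by (rule Conn_determines_ratio_mult)
qed

lemma bphase_alpha_path_outside_BP:
  assumes "honeycomb ends lab" and "p \<notin> BP ends lab P"
  shows "bphase lab p (x \<oplus>\<^sub>s alpha_path P) = bphase lab p x"
proof -
  have "\<forall>x. bphase lab p (x \<oplus>\<^sub>s alpha_path P) = bphase lab p x"
  proof (induction rule: bphase_factor_induct)
    case (3 j E g)
    have "lab p j \<in> alpha_p lab p" using \<open>j \<in> {1..6}\<close> by (simp add: alpha_p_def)
    then have "lab p j \<notin> Conn ends P" using assms(2) by (auto simp: BP_def)
    then have "corner lab p j \<inter> alpha_path P = {}"
      using corner_subset_Conn_or_disjoint[OF assms(1) \<open>j \<in> {1..6}\<close>, of p P]
      unfolding corner_def by blast
    with \<open>E \<subseteq> corner lab p j\<close> have "(u \<oplus>\<^sub>s alpha_path P) \<inter> E = u \<inter> E" for u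
      unfolding xor_set_def by blast
    with \<open>depends_only_on E g\<close> show ?case by (blast intro: depends_only_onD)
  qed simp_all
  then show ?thesis by blast
qed

subsection \<open>Algorithm 1\<close>

lemma algorithm1_output_common_representative:
  assumes F: "algorithm1_output ends lab P F"
    and x: "x \<subseteq> Conn ends P" and p: "p \<in> BP ends lab P"
  obtains r ps qs where "distinct ps" "distinct qs" "set qs = (set ps - {p}) \<union> ({p} - set ps)"
    and "(r \<oplus>\<^sub>s alpha_list lab ps) \<inter> Conn ends P = x"
    and "F x = theta lab P r ps * F r"
    and "F ((r \<oplus>\<^sub>s alpha_list lab qs) \<inter> Conn ends P) = theta lab P r qs * F r"
proof -
  let ?C = "Conn ends P"
  from F obtain rep where rep: "\<And>y. y \<subseteq> ?C \<Longrightarrow>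
       rep y \<in> config_class ends lab P y \<and> (\<forall>z\<in>config_class ends lab P y. rep z = rep y) \<and>
       cmod (F (rep y)) = 1 \<and>
       (\<forall>S \<subseteq> BP ends lab P. \<exists>ps. distinct ps \<and> set ps = S \<and>
          F ((rep y \<oplus>\<^sub>s alpha_list lab ps) \<inter> ?C) = theta lab P (rep y) ps * F (rep y))"
    unfolding algorithm1_output_def by blast
  define r where "r = rep x"
  have r: "r \<in> config_class ends lab P x"
    and alg: "\<forall>S \<subseteq> BP ends lab P. \<exists>ps. distinct ps \<and> set ps = S \<and>
          F ((r \<oplus>\<^sub>s alpha_list lab ps) \<inter> ?C) = theta lab P r ps * F r"
    using rep[OF x] unfolding r_def by blast+
  from r obtain S where S: "S \<subseteq> BP ends lab P" "r = (x \<oplus>\<^sub>s alpha_set lab S) \<inter> ?C"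
    unfolding config_class_def by blast
  from alg S(1) obtain ps where ps: "distinct ps" "set ps = S"
    and Fps: "F ((r \<oplus>\<^sub>s alpha_list lab ps) \<inter> ?C) = theta lab P r ps * F r" by blast
  have "(S - {p}) \<union> ({p} - S) \<subseteq> BP ends lab P" using S(1) p by blast
  with alg obtain qs where qs: "distinct qs" "set qs = (S - {p}) \<union> ({p} - S)"
    and Fqs: "F ((r \<oplus>\<^sub>s alpha_list lab qs) \<inter> ?C) = theta lab P r qs * F r" by blast
  have "alpha_list lab ps = alpha_set lab S" using alpha_list_eq_alpha_set[OF ps(1)] ps(2) by simp
  with S(2) x have "(r \<oplus>\<^sub>s alpha_list lab ps) \<inter> ?C = x"
    by (simp add: Int_xor_set_Int xor_set_assoc Int_absorb2)
  with ps qs Fps Fqs show thesis by (intro that[of ps qs r]) simp_all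
qed

lemma algorithm1_output_toggle:
  assumes hc: "honeycomb ends lab" and comm: "B_commuting_involutions lab"
    and F: "algorithm1_output ends lab P F"
    and x: "x \<subseteq> Conn ends P" and p: "p \<in> BP ends lab P"
  shows "F ((x \<oplus>\<^sub>s alpha_p lab p) \<inter> Conn ends P)
           = bphase lab p (x \<oplus>\<^sub>s alpha_path P) / bphase lab p x * F x"
proof -
  let ?C = "Conn ends P" and ?A = "alpha_path P"
  obtain r ps qs where toggle: "distinct ps" "distinct qs" "set qs = (set ps - {p}) \<union> ({p} - set ps)"
    and y: "(r \<oplus>\<^sub>s alpha_list lab ps) \<inter> ?C = x"
    and Fx: "F x = theta lab P r ps * F r"
    and Fqs: "F ((r \<oplus>\<^sub>s alpha_list lab qs) \<inter> ?C) = theta lab P r qs * F r"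
    using algorithm1_output_common_representative[OF F x p] .
  let ?y = "r \<oplus>\<^sub>s alpha_list lab ps"
  have "(r \<oplus>\<^sub>s alpha_list lab qs) \<inter> ?C = (x \<oplus>\<^sub>s alpha_p lab p) \<inter> ?C"
    using Int_xor_set_Int[of ?y ?C "alpha_p lab p"]
    by (simp add: phase_prod_toggle(2)[OF comm toggle] y xor_set_assoc)
  with Fqs have "F ((x \<oplus>\<^sub>s alpha_p lab p) \<inter> ?C) = theta lab P r qs * F r" by simp
  also have "\<dots> = bphase lab p (?y \<oplus>\<^sub>s ?A) / bphase lab p ?y * (theta lab P r ps * F r)"
    by (simp add: theta_toggle[OF comm toggle])
  also have "bphase lab p (?y \<oplus>\<^sub>s ?A) / bphase lab p ?y = bphase lab p (x \<oplus>\<^sub>s ?A) / bphase lab p x"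
    using Conn_determines_ratio_bphase[OF hc] y x
    unfolding Conn_determines_ratio_def by (metis Int_absorb2)
  finally show ?thesis by (simp add: Fx)
qed

lemma Splus_commutes_Bop:
  assumes hc: "honeycomb ends lab"
    and F: "\<And>x q. x \<subseteq> Conn ends P \<Longrightarrow> q \<in> BP ends lab P \<Longrightarrow>
              F ((x \<oplus>\<^sub>s alpha_p lab q) \<inter> Conn ends P)
                = bphase lab q (x \<oplus>\<^sub>s alpha_path P) / bphase lab q x * F x"
  shows "op_mult (Splus ends P F) (Bop lab p) = op_mult (Bop lab p) (Splus ends P F)"
proof (intro ext)
  fix j i
  let ?C = "Conn ends P" and ?A = "alpha_path P" and ?a = "alpha_p lab p"
  have key: "F ((i \<oplus>\<^sub>s ?a) \<inter> ?C) * bphase lab p i = bphase lab p (i \<oplus>\<^sub>s ?A) * F (i \<inter> ?C)"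
  proof (cases "p \<in> BP ends lab P")
    case True
    have "F ((i \<oplus>\<^sub>s ?a) \<inter> ?C) = F (((i \<inter> ?C) \<oplus>\<^sub>s ?a) \<inter> ?C)"
      by (simp add: Int_xor_set_Int)
    also have "\<dots> = bphase lab p ((i \<inter> ?C) \<oplus>\<^sub>s ?A) / bphase lab p (i \<inter> ?C) * F (i \<inter> ?C)"
      using F[OF _ True] by simp
    also have "bphase lab p ((i \<inter> ?C) \<oplus>\<^sub>s ?A) / bphase lab p (i \<inter> ?C)
        = bphase lab p (i \<oplus>\<^sub>s ?A) / bphase lab p i"
      by (rule Conn_determines_ratio_bphase[OF hc, unfolded Conn_determines_ratio_def, rule_format]) simp
    finally show ?thesis by (simp add: bphase_def Let_def)
  next
    case False
    then have "(i \<oplus>\<^sub>s ?a) \<inter> ?C = i \<inter> ?C" by (auto simp: BP_def xor_set_def)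
    then show ?thesis using bphase_alpha_path_outside_BP[OF hc False] by simp
  qed
  have "op_mult (Splus ends P F) (Bop lab p) j i = Splus ends P F j (i \<oplus>\<^sub>s ?a) * bphase lab p i"
    by (rule op_mult_weighted_shift) (simp add: Bop_def)
  also have "\<dots> = Bop lab p j (i \<oplus>\<^sub>s ?A) * F (i \<inter> ?C)"
    using key by (simp add: Splus_def Bop_def xor_set_assoc xor_set_commute[of ?A])
  also have "\<dots> = op_mult (Bop lab p) (Splus ends P F) j i"
    by (rule op_mult_weighted_shift[symmetric]) (simp add: Splus_def)
  finally show "op_mult (Splus ends P F) (Bop lab p) j i = op_mult (Bop lab p) (Splus ends P F) j i" .
qed

theorem lemma4:
  fixes ends :: "'e::finite \<Rightarrow> 'v::finite set"
    and lab :: "'p::finite \<Rightarrow> nat \<Rightarrow> 'e"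
    and P :: "'e list"
    and F :: "'e set \<Rightarrow> complex"
  assumes "honeycomb ends lab"
    and "B_commuting_involutions lab"
    and "is_walk ends P"
    and "algorithm1_output ends lab P F"
  shows "(\<forall>x p. x \<subseteq> Conn ends P \<longrightarrow> p \<in> BP ends lab P \<longrightarrow>
            F ((x \<oplus>\<^sub>s alpha_p lab p) \<inter> Conn ends P)
              = bphase lab p (x \<oplus>\<^sub>s alpha_path P) / bphase lab p x * F x)
       \<and> (\<forall>p. op_mult (Splus ends P F) (Bop lab p) = op_mult (Bop lab p) (Splus ends P F))"
proof -
  have shift: "\<forall>x p. x \<subseteq> Conn ends P \<longrightarrow> p \<in> BP ends lab P \<longrightarrow>
            F ((x \<oplus>\<^sub>s alpha_p lab p) \<inter> Conn ends P)
              = bphase lab p (x \<oplus>\<^sub>s alpha_path P) / bphase lab p x * F x"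
    using algorithm1_output_toggle[OF assms(1,2,4)] by blast
  then show ?thesis using Splus_commutes_Bop[OF assms(1)] by blast
qed

end
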